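(* Let $\mathbb D$ be an arbitrary commutative ring with identity, and write $\mathbb D$ also for its additive group. (1) For each integer $n\ge1$, $$TS\mathcal R_n(\mathbb D)^{ab}\cong TS\mathcal A_1(\mathbb D)\times T\mathcal J_n(\mathbb D)^{ab}\cong \mathbb D\times T\mathcal J_n(\mathbb D)^{ab}.$$ (2) Considering $S\mathcal R(\mathbb D)$ and $\mathcal J(\mathbb D)$ as abstract groups, $$S\mathcal R(\mathbb D)^{ab}\cong\mathbb D\times\mathcal J(\mathbb D)^{ab}.$$
   Context: The Riordan group over $\mathbb D$ consists of pairs $(g,f)$ of formal power series $g=\sum_{k\ge0}g_kt^k$, $f=\sum_{k\ge1}f_kt^k$ in $\mathbb D[[t]]$ with $g_0,f_1$ units, identified with the lower triangular matrices $(d_{n,k})_{n,k\ge0}$, $d_{n,k}=[t^n]g f^k$; the product is $(g_1,f_1)(g_2,f_2)=(g_1\cdot(g_2\circ f_1),\,f_2\circ f_1)$, identity $(1,t)$. $S\mathcal R(\mathbb D)$ is the subgroup of pairs with $g_0=1$ and $f_1=1$. $\mathcal J(\mathbb D)$ is the subgroup $\{(1,f): f=t+f_2t^2+\cdots\}$ (the group of formal power series under substitution), and $S\mathcal A(\mathbb D)=\{(g,t):g_0=1\}$. For $n\ge0$, $TS\mathcal R_n(\mathbb D)$, $T\mathcal J_n(\mathbb D)$, $TS\mathcal A_n(\mathbb D)$ denote the groups of $(n+1)\times(n+1)$ upper-left truncations $(d_{i,j})_{0\le i,j\le n}$ of elements of $S\mathcal R(\mathbb D)$, $\mathcal J(\mathbb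 D)$, $S\mathcal A(\mathbb D)$ respectively; in particular $TS\mathcal A_1(\mathbb D)=\{\begin{pmatrix}1&0\\\alpha&1\end{pmatrix}\}\cong\mathbb D$. $G^{ab}=G/[G,G]$ denotes the abelianization (abstract commutator subgroup). *)

theory Defs
  imports "HOL-Algebra.Algebra" "HOL-Computational_Algebra.Formal_Power_Series"
begin

definition abelianization :: "('a, 'b) monoid_scheme \<Rightarrow> 'a set monoid" where
  "abelianization G = G Mod (derived G (carrier G))"

definition additive_group :: "('a::comm_ring_1) monoid" where
  "additive_group = \<lparr>carrier = UNIV, monoid.mult = (+), one = 0\<rparr>"

definition riordan_mult :: "('a::comm_ring_1 fps \<times> 'a fps) \<Rightarrow> ('a fps \<times> 'a fps) \<Rightarrow> ('a fps \<times> 'a fps)" where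
  "riordan_mult p q = (fst p * (fst q oo snd p), snd q oo snd p)"

definition SR_carrier :: "('a::comm_ring_1 fps \<times> 'a fps) set" where
  "SR_carrier = {(g, f). fps_nth g 0 = 1 \<and> fps_nth f 0 = 0 \<and> fps_nth f 1 = 1}"

definition J_carrier :: "('a::comm_ring_1 fps \<times> 'a fps) set" where
  "J_carrier = {(g, f). g = 1 \<and> fps_nth f 0 = 0 \<and> fps_nth f 1 = 1}"

definition SA_carrier :: "('a::comm_ring_1 fps \<times> 'a fps) set" where
  "SA_carrier = {(g, f). fps_nth g 0 = 1 \<and> f = fps_X}"

definition riordan_group_on :: "('a::comm_ring_1 fps \<times> 'a fps) set \<Rightarrow> ('a fps \<times> 'a fps) monoid" where
  "riordan_group_on S = \<lparr>carrier = S, monoid.mult = riordan_mult, one = (1, fps_X)\<rparr>"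

abbreviation SR_group :: "('a::comm_ring_1 fps \<times> 'a fps) monoid" where
  "SR_group \<equiv> riordan_group_on SR_carrier"

abbreviation J_group :: "('a::comm_ring_1 fps \<times> 'a fps) monoid" where
  "J_group \<equiv> riordan_group_on J_carrier"

definition riordan_trunc :: "nat \<Rightarrow> ('a::comm_ring_1 fps \<times> 'a fps) \<Rightarrow> (nat \<Rightarrow> nat \<Rightarrow> 'a)" where
  "riordan_trunc n p = (\<lambda>i j. if i \<le> n \<and> j \<le> n then fps_nth (fst p * snd p ^ j) i else 0)"

definition trunc_mat_mult :: "nat \<Rightarrow> (nat \<Rightarrow> nat \<Rightarrow> 'a::comm_ring_1) \<Rightarrow> (nat \<Rightarrow> nat \<Rightarrow> 'a) \<Rightarrow> (nat \<Rightarrow> nat \<Rightarrow> 'a)" where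
  "trunc_mat_mult n A B = (\<lambda>i j. if i \<le> n \<and> j \<le> n then (\<Sum>k\<le>n. A i k * B k j) else 0)"

definition trunc_mat_one :: "nat \<Rightarrow> (nat \<Rightarrow> nat \<Rightarrow> 'a::comm_ring_1)" where
  "trunc_mat_one n = (\<lambda>i j. if i \<le> n \<and> j \<le> n \<and> i = j then 1 else 0)"

definition trunc_group :: "nat \<Rightarrow> ('a::comm_ring_1 fps \<times> 'a fps) set \<Rightarrow> (nat \<Rightarrow> nat \<Rightarrow> 'a) monoid" where
  "trunc_group n S = \<lparr>carrier = riordan_trunc n ` S, monoid.mult = trunc_mat_mult n, one = trunc_mat_one n\<rparr>"

abbreviation TSR :: "nat \<Rightarrow> (nat \<Rightarrow> nat \<Rightarrow> 'a::comm_ring_1) monoid" where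
  "TSR n \<equiv> trunc_group n SR_carrier"
abbreviation TJ :: "nat \<Rightarrow> (nat \<Rightarrow> nat \<Rightarrow> 'a::comm_ring_1) monoid" where
  "TJ n \<equiv> trunc_group n J_carrier"
abbreviation TSA :: "nat \<Rightarrow> (nat \<Rightarrow> nat \<Rightarrow> 'a::comm_ring_1) monoid" where
  "TSA n \<equiv> trunc_group n SA_carrier"

end

(*
  Both parts rest on one splitting argument. On SR(D) the map alpha (g, f) = g_1 is a
  homomorphism onto (D, +) that is trivial on J(D), and rho (g, f) = (1, f) is a homomorphism
  retracting SR(D) onto J(D). If every element killed by both maps is a product of commutators,
  then x \<mapsto> (alpha x, rho x mod [J, J]) induces SR(D)^ab \<cong> D \<times> J(D)^ab. The common kernel
  consists of the Appell elements (g, t) with g_1 = 0, and each of them is a single commutator.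
  Truncation to (n+1) x (n+1) matrices is a surjective homomorphism through which alpha (for
  n >= 1) and rho factor, so the same splitting holds for TSR_n(D); finally TSA_1(D) \<cong> D via
  the entry (1, 0).
*)
theory Submission
  imports Defs
begin

unbundle fps_syntax

section \<open>Composition of power series over commutative rings\<close>

text \<open>Formal_Power_Series proves these laws of composition only for coefficients in an
  integral domain; a commutative ring suffices.\<close>

lemma fps_compose_nth_le:
  fixes a c :: "'a::comm_ring_1 fps"
  assumes c0: "c $ 0 = 0" and "n \<le> N"
  shows "(a oo c) $ n = (\<Sum>k\<le>N. a $ k * (c ^ k) $ n)"
  unfolding fps_compose_nth atLeast0AtMost
  by (rule sum.mono_neutral_left) (use assms startsby_zero_power_prefix[OF c0] in auto)

lemma fps_compose_mult_distrib_comm_ring: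
  fixes a b c :: "'a::comm_ring_1 fps"
  assumes c0: "c $ 0 = 0"
  shows "(a * b) oo c = (a oo c) * (b oo c)"
proof (rule fps_ext)
  fix n
  have "((a oo c) * (b oo c)) $ n
      = (\<Sum>i\<le>n. (\<Sum>k\<le>n. a $ k * (c ^ k) $ i) * (\<Sum>m\<le>n. b $ m * (c ^ m) $ (n - i)))"
    unfolding fps_mult_nth atLeast0AtMost
    by (intro sum.cong refl arg_cong2[where f = "(*)"]) (simp_all add: fps_compose_nth_le[OF c0])
  also have "\<dots> = (\<Sum>k\<le>n. \<Sum>m\<le>n. \<Sum>i\<le>n. a $ k * b $ m * ((c ^ k) $ i * (c ^ m) $ (n - i)))"
    (is "?lhs = ?rhs")
  proof -
    have "(\<Sum>k\<le>n. a $ k * (c ^ k) $ i) * (\<Sum>m\<le>n. b $ m * (c ^ m) $ (n - i))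
        = (\<Sum>k\<le>n. \<Sum>m\<le>n. a $ k * b $ m * ((c ^ k) $ i * (c ^ m) $ (n - i)))" for i
      by (simp add: sum_product ac_simps)
    then have "?lhs = (\<Sum>i\<le>n. \<Sum>k\<le>n. \<Sum>m\<le>n. a $ k * b $ m * ((c ^ k) $ i * (c ^ m) $ (n - i)))"
      by simp
    also have "\<dots> = (\<Sum>k\<le>n. \<Sum>i\<le>n. \<Sum>m\<le>n. a $ k * b $ m * ((c ^ k) $ i * (c ^ m) $ (n - i)))"
      by (rule sum.swap)
    also have "\<dots> = ?rhs"
      by (rule sum.cong[OF refl]) (rule sum.swap)
    finally show ?thesis .
  qed
  also have "\<dots> = (\<Sum>k\<le>n. \<Sum>m\<le>n. a $ k * b $ m * (c ^ (k + m)) $ n)"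
    by (simp add: power_add fps_mult_nth atLeast0AtMost sum_distrib_left)
  also have "\<dots> = (\<Sum>(k, m)\<in>{(k, m). k + m \<le> n}. a $ k * b $ m * (c ^ (k + m)) $ n)"
    unfolding sum.cartesian_product
    by (rule sum.mono_neutral_right)
      (auto, metis leI mult_zero_right startsby_zero_power_prefix[OF c0])
  also have "\<dots> = ((a * b) oo c) $ n"
    unfolding sum_pair_less_iff[where c = "\<lambda>s. (c ^ s) $ n"]
    by (simp add: fps_compose_nth fps_mult_nth sum_distrib_right)
  finally show "((a * b) oo c) $ n = ((a oo c) * (b oo c)) $ n" ..
qed

lemma fps_compose_power_comm_ring:
  fixes a c :: "'a::comm_ring_1 fps"
  assumes "c $ 0 = 0"
  shows "a ^ k oo c = (a oo c) ^ k"
  by (induction k) (simp_all add: fps_compose_mult_distrib_comm_ring[OF assms])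

lemma fps_compose_assoc_comm_ring:
  fixes a b c :: "'a::comm_ring_1 fps"
  assumes c0: "c $ 0 = 0" and b0: "b $ 0 = 0"
  shows "a oo (b oo c) = (a oo b) oo c"
proof (rule fps_ext)
  fix n
  have "(a oo (b oo c)) $ n = (\<Sum>k\<le>n. a $ k * (b ^ k oo c) $ n)"
    by (simp add: fps_compose_nth atLeast0AtMost fps_compose_power_comm_ring[OF c0])
  also have "\<dots> = (\<Sum>k\<le>n. \<Sum>i\<le>n. a $ k * ((b ^ k) $ i * (c ^ i) $ n))"
    by (simp add: fps_compose_nth atLeast0AtMost sum_distrib_left)
  also have "\<dots> = (\<Sum>i\<le>n. (a oo b) $ i * (c ^ i) $ n)"
    by (subst sum.swap) (simp add: fps_compose_nth_le[OF b0] sum_distrib_right mult.assoc)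
  also have "\<dots> = ((a oo b) oo c) $ n"
    by (simp add: fps_compose_nth atLeast0AtMost)
  finally show "(a oo (b oo c)) $ n = ((a oo b) oo c) $ n" .
qed

lemma fps_mult_compose_nth_le:
  fixes g h f :: "'a::comm_ring_1 fps"
  assumes f0: "f $ 0 = 0" and "i \<le> N"
  shows "(g * (h oo f)) $ i = (\<Sum>k\<le>N. h $ k * (g * f ^ k) $ i)"
proof -
  have "(g * (h oo f)) $ i = (\<Sum>j\<le>i. \<Sum>k\<le>N. h $ k * (g $ j * (f ^ k) $ (i - j)))"
    using assms
    by (simp add: fps_mult_nth atLeast0AtMost fps_compose_nth_le[where N = N] sum_distrib_left ac_simps)
  also have "\<dots> = (\<Sum>k\<le>N. h $ k * (g * f ^ k) $ i)"
    by (subst sum.swap) (simp add: fps_mult_nth atLeast0AtMost sum_distrib_left)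
  finally show ?thesis .
qed

lemma fps_compose_nth_Suc_0:
  fixes g f :: "'a::comm_ring_1 fps"
  assumes "f $ 0 = 0"
  shows "(g oo f) $ Suc 0 = g $ Suc 0 * f $ Suc 0"
  using assms by (simp add: fps_compose_nth numeral_2_eq_2)

text \<open>For \<open>f = t + f\<^sub>2 t\<^sup>2 + \<dots>\<close> we have \<open>(f ^ i) $ n = 0\<close> for \<open>i > n\<close> and
  \<open>(f ^ n) $ n = 1\<close>, so \<open>(k oo f) $ n = (\<Sum>i<n. k $ i * (f ^ i) $ n) + k $ n\<close>; the recursion
  makes this equal to \<open>fps_X $ n\<close>.\<close>

fun fps_compinv_nth :: "'a::comm_ring_1 fps \<Rightarrow> nat \<Rightarrow> 'a" where
  "fps_compinv_nth f n = fps_X $ n - (\<Sum>i<n. fps_compinv_nth f i * (f ^ i) $ n)"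

declare fps_compinv_nth.simps [simp del]

definition fps_compinv :: "'a::comm_ring_1 fps \<Rightarrow> 'a fps" where
  "fps_compinv f = Abs_fps (fps_compinv_nth f)"

lemma fps_compinv_nth_0 [simp]: "fps_compinv f $ 0 = 0"
  by (simp add: fps_compinv_def fps_compinv_nth.simps[of f 0])

lemma fps_compinv_nth_Suc_0 [simp]: "fps_compinv f $ Suc 0 = 1"
  using fps_compinv_nth.simps[of f 1] fps_compinv_nth.simps[of f 0] by (simp add: fps_compinv_def)

lemma fps_compinv_compose:
  fixes f :: "'a::comm_ring_1 fps"
  assumes f0: "f $ 0 = 0" and f1: "f $ 1 = 1"
  shows "fps_compinv f oo f = fps_X"
proof (rule fps_ext)
  fix n
  have "(fps_compinv f oo f) $ n
      = (\<Sum>i<n. fps_compinv f $ i * (f ^ i) $ n) + fps_compinv f $ n * (f ^ n) $ n"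
    by (simp add: fps_compose_nth atLeast0AtMost lessThan_Suc_atMost[symmetric])
  also have "\<dots> = fps_X $ n"
    using fps_compinv_nth.simps[of f n] f1
    by (simp add: fps_compinv_def startsby_zero_power_nth_same[OF f0])
  finally show "(fps_compinv f oo f) $ n = fps_X $ n" .
qed

lemma fps_compose_compinv:
  fixes f :: "'a::comm_ring_1 fps"
  assumes f0: "f $ 0 = 0" and f1: "f $ 1 = 1"
  shows "f oo fps_compinv f = fps_X"
proof -
  let ?k = "fps_compinv f"
  have k_left_inv: "fps_compinv ?k oo ?k = fps_X"
    by (rule fps_compinv_compose) simp_all
  have "f = (fps_compinv ?k oo ?k) oo f"
    using f0 k_left_inv by simp
  also have "\<dots> = fps_compinv ?k oo (?k oo f)"
    by (rule fps_compose_assoc_comm_ring[symmetric]) (simp_all add: f0)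
  also have "\<dots> = fps_compinv ?k"
    by (simp add: fps_compinv_compose[OF f0 f1])
  finally show ?thesis
    using k_left_inv by simp
qed

section \<open>Abelianization of a group split by a retraction\<close>

lemma hom_through_surj_hom:
  assumes G: "group G" and pi: "\<pi> \<in> hom G H" and pi_surj: "\<pi> ` carrier G = carrier H"
    and g: "g \<in> hom G K" and f_pi: "\<And>x. x \<in> carrier G \<Longrightarrow> f (\<pi> x) = g x"
  shows "f \<in> hom H K"
proof (rule homI)
  fix x' assume "x' \<in> carrier H"
  then obtain x where "x \<in> carrier G" and "x' = \<pi> x"
    using pi_surj by blast
  then show "f x' \<in> carrier K"
    using g by (simp add: f_pi hom_in_carrier)
next
  fix x' y' assume "x' \<in> carrier H" and "y' \<in> carrier H"
  then obtain x y where x: "x \<in> carrier G" "x' = \<pi> x" and y: "y \<in> carrier G" "y' = \<pi> y"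
    using pi_surj by blast
  then have "x' \<otimes>\<^bsub>H\<^esub> y' = \<pi> (x \<otimes>\<^bsub>G\<^esub> y)"
    using pi by (simp add: hom_mult)
  then show "f (x' \<otimes>\<^bsub>H\<^esub> y') = f x' \<otimes>\<^bsub>K\<^esub> f y'"
    using x y g G by (simp add: f_pi hom_mult group.is_monoid monoid.m_closed)
qed

lemma (in group_hom) derived_subset_kernel:
  assumes "comm_group H"
  shows "derived G (carrier G) \<subseteq> kernel G H h"
proof
  fix x assume x: "x \<in> derived G (carrier G)"
  have "h ` derived G (carrier G) = derived H (h ` carrier G)"
    by (rule derived_img[OF subset_refl, symmetric])
  also have "\<dots> = {\<one>\<^bsub>H\<^esub>}"
    using hom_closed by (intro comm_group.derived_eq_singleton[OF assms]) blast
  finally show "x \<in> kernel G H h"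
    using x G.derived_in_carrier[OF subset_refl] by (auto simp: kernel_def)
qed

lemma (in group) commutator_in_derived:
  assumes "a \<in> carrier G" "b \<in> carrier G" "x \<in> carrier G" and "x \<otimes> (b \<otimes> a) = a \<otimes> b"
  shows "x \<in> derived G (carrier G)"
proof -
  have "x = a \<otimes> b \<otimes> inv a \<otimes> inv b"
    using assms by (metis inv_solve_right m_assoc m_closed)
  then have "x \<in> derived_set G (carrier G)"
    using assms(1,2) by blast
  then show ?thesis
    unfolding derived_def by (rule generate.incl)
qed

locale abelianization_splitting =
  G: group G + A: comm_group A
  for G (structure) and A +
  fixes J and \<alpha> and \<rho>
  assumes alpha_hom: "\<alpha> \<in> hom G A"
    and alpha_surj: "\<alpha> ` carrier G = carrier A"
    and alpha_trivial: "\<And>j. j \<in> J \<Longrightarrow> \<alpha> j = \<one>\<^bsub>A\<^esub>"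
    and rho_hom: "\<rho> \<in> hom G G"
    and rho_image: "\<rho> ` carrier G = J"
    and rho_retract: "\<And>j. j \<in> J \<Longrightarrow> \<rho> j = j"
    and common_kernel_derived:
      "\<And>x. \<lbrakk>x \<in> carrier G; \<alpha> x = \<one>\<^bsub>A\<^esub>; \<rho> x = \<one>\<rbrakk> \<Longrightarrow> x \<in> derived G (carrier G)"
begin

abbreviation GJ where "GJ \<equiv> G\<lparr>carrier := J\<rparr>"

sublocale alpha: group_hom G A \<alpha>
  using alpha_hom by unfold_locales

sublocale rho: group_hom G G \<rho>
  using rho_hom by unfold_locales

lemma rho_closed: "x \<in> carrier G \<Longrightarrow> \<rho> x \<in> J"
  using rho_image by blast

lemma J_subgroup: "subgroup J G"
  using rho.img_is_subgroup by (simp add: rho_image)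

lemma J_subset: "J \<subseteq> carrier G"
  using J_subgroup by (rule subgroup.subset)

lemma J_closed: "j \<in> J \<Longrightarrow> j \<in> carrier G"
  using J_subset by blast

lemma group_GJ: "group GJ"
  using G.subgroup_imp_group[OF J_subgroup] .

lemma rho_hom_GJ: "\<rho> \<in> hom G GJ"
  using rho_hom rho_closed by (auto simp: hom_def)

lemma rho_alpha_complement:
  assumes "x \<in> carrier G"
  shows "\<rho> (x \<otimes> inv (\<rho> x)) = \<one>" and "\<alpha> (x \<otimes> inv (\<rho> x)) = \<alpha> x"
  using assms rho_closed[OF assms] J_closed rho_retract alpha_trivial by auto

lemma complement_in_derived:
  assumes "x \<in> carrier G" and "\<alpha> x = \<one>\<^bsub>A\<^esub>"
  shows "x \<otimes> inv (\<rho> x) \<in> derived G (carrier G)"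
  using assms rho_alpha_complement[OF assms(1)] rho_closed[OF assms(1)] J_closed
  by (intro common_kernel_derived) auto

definition split_map where
  "split_map x = (\<alpha> x, derived GJ (carrier GJ) #>\<^bsub>GJ\<^esub> \<rho> x)"

lemma comm_group_DirProd_abelianization: "comm_group (A \<times>\<times> abelianization GJ)"
proof -
  interpret Q: comm_group "abelianization GJ"
    unfolding abelianization_def by (rule group.derived_quot_is_comm_group[OF group_GJ])
  show ?thesis
    by (rule group.group_comm_groupI[OF DirProd_group[OF A.is_group Q.is_group]])
      (auto simp: A.m_comm Q.m_comm)
qed

lemma split_map_hom: "split_map \<in> hom G (A \<times>\<times> abelianization GJ)"
proof -
  interpret GJ: group GJ by (rule group_GJ)
  interpret N: normal "derived GJ (carrier GJ)" GJ
    by (rule GJ.derived_self_is_normal)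
  have "(\<lambda>j. derived GJ (carrier GJ) #>\<^bsub>GJ\<^esub> j) \<circ> \<rho> \<in> hom G (abelianization GJ)"
    unfolding abelianization_def by (rule hom_compose[OF rho_hom_GJ N.r_coset_hom_Mod])
  then show ?thesis
    using alpha_hom by (auto simp: hom_def split_map_def)
qed

lemma split_map_group_hom: "group_hom G (A \<times>\<times> abelianization GJ) split_map"
  using G.is_group comm_group_DirProd_abelianization split_map_hom
  by (simp add: group_hom_def group_hom_axioms_def comm_group_def)

lemma split_map_surj: "split_map ` carrier G = carrier (A \<times>\<times> abelianization GJ)"
proof
  show "split_map ` carrier G \<subseteq> carrier (A \<times>\<times> abelianization GJ)"
    using split_map_hom by (rule hom_carrier)
next
  show "carrier (A \<times>\<times> abelianization GJ) \<subseteq> split_map ` carrier G"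
  proof
    fix t assume "t \<in> carrier (A \<times>\<times> abelianization GJ)"
    then obtain d j where t: "t = (d, derived GJ (carrier GJ) #>\<^bsub>GJ\<^esub> j)"
      and d: "d \<in> carrier A" and j: "j \<in> J"
      by (auto simp: abelianization_def FactGroup_def RCOSETS_def)
    obtain x where x: "x \<in> carrier G" and d_eq: "d = \<alpha> x"
      using d alpha_surj by auto
    have jG: "j \<in> carrier G" and rxG: "\<rho> x \<in> carrier G"
      using j x J_closed rho_closed by auto
    show "t \<in> split_map ` carrier G"
    proof
      show "t = split_map ((x \<otimes> inv (\<rho> x)) \<otimes> j)"
        using x j jG rxG rho_alpha_complement[OF x] rho_retract alpha_trivial
        by (simp add: t d_eq split_map_def)
      show "(x \<otimes> inv (\<rho> x)) \<otimes> j \<in> carrier G"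
        using x jG rxG by simp
    qed
  qed
qed

lemma kernel_split_map_subset: "kernel G (A \<times>\<times> abelianization GJ) split_map \<subseteq> derived G (carrier G)"
proof
  interpret GJ: group GJ by (rule group_GJ)
  fix x assume "x \<in> kernel G (A \<times>\<times> abelianization GJ) split_map"
  then have x: "x \<in> carrier G" and "split_map x = (\<one>\<^bsub>A\<^esub>, derived GJ (carrier GJ))"
    by (simp_all add: kernel_def abelianization_def FactGroup_def)
  then have ax: "\<alpha> x = \<one>\<^bsub>A\<^esub>"
    and coset: "derived GJ (carrier GJ) #>\<^bsub>GJ\<^esub> \<rho> x = derived GJ (carrier GJ)"
    by (simp_all add: split_map_def)
  have "\<rho> x \<in> derived GJ (carrier GJ)"
    using GJ.coset_join1[OF coset] rho_closed[OF x] GJ.derived_is_subgroup by simp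
  also have "derived GJ (carrier GJ) = derived G J"
    using G.derived_consistent[OF subset_refl J_subgroup] by simp
  also have "\<dots> \<subseteq> derived G (carrier G)"
    using G.mono_derived[OF J_subset] .
  finally have "\<rho> x \<in> derived G (carrier G)" .
  with complement_in_derived[OF x ax]
  have "(x \<otimes> inv (\<rho> x)) \<otimes> \<rho> x \<in> derived G (carrier G)"
    by (rule subgroup.m_closed[OF G.derived_is_subgroup[OF subset_refl]])
  then show "x \<in> derived G (carrier G)"
    using x rho_closed[OF x] J_closed by (simp add: G.m_assoc)
qed

lemma kernel_split_map: "kernel G (A \<times>\<times> abelianization GJ) split_map = derived G (carrier G)"
  using kernel_split_map_subset
    group_hom.derived_subset_kernel[OF split_map_group_hom comm_group_DirProd_abelianization]
  by (rule equalityI)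

theorem abelianization_iso: "abelianization G \<cong> A \<times>\<times> abelianization GJ"
proof -
  have "G Mod kernel G (A \<times>\<times> abelianization GJ) split_map \<cong> A \<times>\<times> abelianization GJ"
    by (rule group_hom.FactGroup_iso[OF split_map_group_hom split_map_surj])
  then show ?thesis
    unfolding abelianization_def[of G] kernel_split_map .
qed

lemma image_splitting:
  assumes H: "group H" and pi_hom: "\<pi> \<in> hom G H" and pi_surj: "\<pi> ` carrier G = carrier H"
    and alpha': "\<And>x. x \<in> carrier G \<Longrightarrow> \<alpha>' (\<pi> x) = \<alpha> x"
    and rho': "\<And>x. x \<in> carrier G \<Longrightarrow> \<rho>' (\<pi> x) = \<pi> (\<rho> x)"
  shows "abelianization_splitting H A (\<pi> ` J) \<alpha>' \<rho>'"
proof -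
  interpret pi: group_hom G H \<pi>
    unfolding group_hom_def group_hom_axioms_def using G.is_group H pi_hom by blast
  have derived_H: "\<pi> ` derived G (carrier G) = derived H (carrier H)"
    using pi.derived_img[of "carrier G"] pi_surj by simp
  show ?thesis
  proof (unfold_locales, goal_cases)
    case 1
    show ?case
      using G.is_group pi_hom pi_surj alpha_hom alpha' by (rule hom_through_surj_hom)
  next
    case 2
    have "\<alpha>' ` carrier H = \<alpha> ` carrier G"
      unfolding pi_surj[symmetric] image_image by (rule image_cong[OF refl alpha'])
    then show ?case
      using alpha_surj by simp
  next
    case (3 j')
    then obtain j where "j \<in> J" and "j' = \<pi> j"
      by blast
    then show ?case
      by (simp add: J_closed alpha_trivial alpha')
  next
    case 4
    have "\<pi> \<circ> \<rho> \<in> hom G H"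
      using rho_hom pi_hom by (rule hom_compose)
    then show ?case
      by (rule hom_through_surj_hom[OF G.is_group pi_hom pi_surj]) (simp add: rho')
  next
    case 5
    show ?case
      unfolding pi_surj[symmetric] image_image rho_image[symmetric] by (rule image_cong[OF refl rho'])
  next
    case (6 j')
    then obtain j where "j \<in> J" and "j' = \<pi> j"
      by blast
    then show ?case
      by (simp add: J_closed rho_retract rho')
  next
    case (7 x')
    then obtain x where x: "x \<in> carrier G" and x': "x' = \<pi> x"
      using pi_surj by blast
    have ax: "\<alpha> x = \<one>\<^bsub>A\<^esub>" and rx: "\<pi> (\<rho> x) = \<one>\<^bsub>H\<^esub>"
      using 7 x x' alpha' rho' by simp_all
    have "\<pi> (x \<otimes> inv (\<rho> x)) = x'"
      using x x' rx rho_closed[OF x] J_closed by simp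
    moreover have "x \<otimes> inv (\<rho> x) \<in> derived G (carrier G)"
      using x ax by (rule complement_in_derived)
    ultimately show ?case
      unfolding derived_H[symmetric] by (rule image_eqI[OF sym])
  qed
qed

end

section \<open>The Riordan group SR(D)\<close>

lemma riordan_group_on_simps [simp]:
  "carrier (riordan_group_on S) = S"
  "x \<otimes>\<^bsub>riordan_group_on S\<^esub> y = riordan_mult x y"
  "\<one>\<^bsub>riordan_group_on S\<^esub> = (1, fps_X)"
  by (simp_all add: riordan_group_on_def)

lemma riordan_mult_Pair [simp]: "riordan_mult (g1, f1) (g2, f2) = (g1 * (g2 oo f1), f2 oo f1)"
  by (simp add: riordan_mult_def)

lemma SR_carrier_iff [simp]: "(g, f) \<in> SR_carrier \<longleftrightarrow> g $ 0 = 1 \<and> f $ 0 = 0 \<and> f $ 1 = 1"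
  by (simp add: SR_carrier_def)

lemma J_carrier_iff [simp]: "(g, f) \<in> J_carrier \<longleftrightarrow> g = 1 \<and> f $ 0 = 0 \<and> f $ 1 = 1"
  by (simp add: J_carrier_def)

lemma riordan_mult_closed:
  "p \<in> SR_carrier \<Longrightarrow> q \<in> SR_carrier \<Longrightarrow> riordan_mult p q \<in> SR_carrier"
  by (cases p, cases q) (simp add: fps_compose_nth_Suc_0)

lemma group_SR: "group (SR_group :: ('a::comm_ring_1 fps \<times> 'a fps) monoid)"
proof (rule groupI)
  fix x :: "'a fps \<times> 'a fps"
  assume "x \<in> carrier SR_group"
  then obtain g f where x: "x = (g, f)" and g0: "g $ 0 = 1" and f0: "f $ 0 = 0" and f1: "f $ 1 = 1"
    by (cases x) simp
  define k where "k = fps_compinv f"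
  define h where "h = fps_right_inverse (g oo k) 1"
  have "(g oo k) * h = 1"
    unfolding h_def by (rule fps_right_inverse) (simp add: g0)
  then have "(h, k) \<otimes>\<^bsub>SR_group\<^esub> x = \<one>\<^bsub>SR_group\<^esub>"
    by (simp add: x k_def fps_compose_compinv[OF f0 f1] mult.commute)
  moreover have "(h, k) \<in> carrier SR_group"
    by (simp add: h_def k_def)
  ultimately show "\<exists>y\<in>carrier SR_group. y \<otimes>\<^bsub>SR_group\<^esub> x = \<one>\<^bsub>SR_group\<^esub>"
    by blast
qed (auto simp: riordan_mult_closed fps_compose_mult_distrib_comm_ring fps_compose_assoc_comm_ring mult.assoc)

lemma comm_group_additive_group: "comm_group (additive_group :: 'a::comm_ring_1 monoid)"
proof (rule comm_groupI)
  fix x :: 'a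
  show "\<exists>y\<in>carrier additive_group. y \<otimes>\<^bsub>additive_group\<^esub> x = \<one>\<^bsub>additive_group\<^esub>"
    by (rule bexI[of _ "- x"]) (simp_all add: additive_group_def)
qed (auto simp: additive_group_def algebra_simps)

text \<open>\<open>(g, t)\<close> is the commutator of \<open>(1 + t, t)\<close> and \<open>(1, f)\<close>, where \<open>g (1 + f) = 1 + t\<close>.\<close>

lemma Appell_in_derived_SR:
  fixes g :: "'a::comm_ring_1 fps"
  assumes g0: "g $ 0 = 1" and g1: "g $ 1 = 0"
  shows "(g, fps_X) \<in> derived SR_group (carrier SR_group)"
proof -
  define f where "f = (1 + fps_X) * fps_right_inverse g 1 - 1"
  have g_f: "g * (1 + f) = 1 + fps_X"
    using fps_right_inverse[of g 1] g0 by (simp add: f_def algebra_simps)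
  have "f $ 1 = (g * (1 + f)) $ 1"
    using g0 g1 by (simp add: fps_mult_nth_1)
  then have f1: "f $ 1 = 1"
    by (simp add: g_f)
  have f0: "f $ 0 = 0"
    using g0 by (simp add: f_def)
  let ?a = "(1 + fps_X, fps_X) :: 'a fps \<times> 'a fps" and ?b = "(1, f)"
  have "(g, fps_X) \<otimes>\<^bsub>SR_group\<^esub> (?b \<otimes>\<^bsub>SR_group\<^esub> ?a) = ?a \<otimes>\<^bsub>SR_group\<^esub> ?b"
    using f0 g_f by (simp add: fps_compose_add_distrib)
  then show ?thesis
    using group.commutator_in_derived[OF group_SR, of ?a ?b "(g, fps_X)"] g0 f0 f1 by simp
qed

lemma abelianization_splitting_SR:
  "abelianization_splitting (SR_group :: ('a::comm_ring_1 fps \<times> 'a fps) monoid) additive_group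
     J_carrier (\<lambda>p. fst p $ 1) (\<lambda>p. (1, snd p))"
proof (intro abelianization_splitting.intro abelianization_splitting_axioms.intro
    group_SR comm_group_additive_group)
  show "(\<lambda>p. fst p $ 1) \<in> hom SR_group (additive_group :: 'a monoid)"
    by (rule homI) (auto simp: additive_group_def fps_compose_nth_Suc_0)
  have "d \<in> (\<lambda>p. fst p $ 1) ` carrier SR_group" for d :: 'a
    by (rule image_eqI[of _ _ "(1 + fps_const d * fps_X, fps_X)"]) simp_all
  then show "(\<lambda>p. fst p $ 1) ` carrier SR_group = carrier (additive_group :: 'a monoid)"
    by (auto simp: additive_group_def)
  show "(\<lambda>p. (1, snd p)) \<in> hom SR_group SR_group"
    by (rule homI) auto
  show "(\<lambda>p. (1, snd p)) ` carrier (SR_group :: ('a fps \<times> 'a fps) monoid) = J_carrier"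
  proof
    show "(\<lambda>p. (1, snd p)) ` carrier (SR_group :: ('a fps \<times> 'a fps) monoid) \<subseteq> J_carrier"
      by (auto simp: SR_carrier_def)
    show "J_carrier \<subseteq> (\<lambda>p. (1, snd p)) ` carrier (SR_group :: ('a fps \<times> 'a fps) monoid)"
    proof
      fix p :: "'a fps \<times> 'a fps"
      assume "p \<in> J_carrier"
      then show "p \<in> (\<lambda>p. (1, snd p)) ` carrier SR_group"
        by (intro image_eqI[of _ _ p]) (auto simp: J_carrier_def)
    qed
  qed
next
  fix p :: "'a fps \<times> 'a fps"
  assume "p \<in> J_carrier"
  then show "fst p $ 1 = \<one>\<^bsub>additive_group\<^esub>" and "(1, snd p) = p"
    by (auto simp: J_carrier_def additive_group_def)
next
  fix p :: "'a fps \<times> 'a fps"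
  assume "p \<in> carrier SR_group" and "fst p $ 1 = \<one>\<^bsub>additive_group\<^esub>"
    and "(1, snd p) = \<one>\<^bsub>SR_group\<^esub>"
  then obtain g where "p = (g, fps_X)" and "g $ 0 = 1" and "g $ 1 = 0"
    by (cases p) (auto simp: additive_group_def)
  then show "p \<in> derived SR_group (carrier SR_group)"
    using Appell_in_derived_SR by blast
qed

section \<open>Truncated Riordan matrices\<close>

lemma riordan_trunc_mult:
  fixes p q :: "'a::comm_ring_1 fps \<times> 'a fps"
  assumes "snd p $ 0 = 0"
  shows "riordan_trunc n (riordan_mult p q) = trunc_mat_mult n (riordan_trunc n p) (riordan_trunc n q)"
proof (intro ext)
  fix i j
  obtain g1 f1 g2 f2 where p: "p = (g1, f1)" and q: "q = (g2, f2)"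
    by (cases p, cases q)
  have f1: "f1 $ 0 = 0"
    using assms p by simp
  have "g1 * (g2 oo f1) * (f2 oo f1) ^ j = g1 * ((g2 * f2 ^ j) oo f1)"
    by (simp add: fps_compose_mult_distrib_comm_ring[OF f1] fps_compose_power_comm_ring[OF f1] mult.assoc)
  then have "i \<le> n \<Longrightarrow> (g1 * (g2 oo f1) * (f2 oo f1) ^ j) $ i = (\<Sum>k\<le>n. (g2 * f2 ^ j) $ k * (g1 * f1 ^ k) $ i)"
    by (simp add: fps_mult_compose_nth_le[OF f1])
  then show "riordan_trunc n (riordan_mult p q) i j = trunc_mat_mult n (riordan_trunc n p) (riordan_trunc n q) i j"
    by (simp add: riordan_trunc_def trunc_mat_mult_def p q mult.commute)
qed

lemma riordan_trunc_one: "riordan_trunc n (1, fps_X) = trunc_mat_one n"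
  by (intro ext) (simp add: riordan_trunc_def trunc_mat_one_def)

lemma riordan_trunc_hom: "riordan_trunc n \<in> hom SR_group (TSR n :: (nat \<Rightarrow> nat \<Rightarrow> 'a::comm_ring_1) monoid)"
proof (rule homI)
  fix p q :: "'a fps \<times> 'a fps"
  assume "p \<in> carrier SR_group"
  then show "riordan_trunc n (p \<otimes>\<^bsub>SR_group\<^esub> q) = riordan_trunc n p \<otimes>\<^bsub>TSR n\<^esub> riordan_trunc n q"
    by (cases p) (simp add: trunc_group_def riordan_trunc_mult del: riordan_mult_Pair)
qed (simp add: trunc_group_def)

lemma group_TSR: "group (TSR n :: (nat \<Rightarrow> nat \<Rightarrow> 'a::comm_ring_1) monoid)"
proof -
  have "group ((TSR n)\<lparr>carrier := riordan_trunc n ` carrier SR_group,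
      one := riordan_trunc n \<one>\<^bsub>SR_group :: ('a fps \<times> 'a fps) monoid\<^esub>\<rparr>)"
    by (rule group.hom_imp_img_group[OF group_SR riordan_trunc_hom])
  then show ?thesis
    by (simp add: trunc_group_def riordan_trunc_one)
qed

lemma riordan_trunc_Appell:
  "riordan_trunc n (g, fps_X) i j = (if i \<le> n \<and> j \<le> n \<and> j \<le> i then g $ (i - j) else 0)"
  by (auto simp: riordan_trunc_def fps_X_power_mult_right_nth)

text \<open>Since \<open>(g, f) = (g, t) (1, f)\<close>, the Lagrange factor of a truncated matrix is obtained
  by dividing off its Appell factor, which is the Toeplitz matrix of its first column.\<close>

definition trunc_Appell_part :: "nat \<Rightarrow> (nat \<Rightarrow> nat \<Rightarrow> 'a::comm_ring_1) \<Rightarrow> (nat \<Rightarrow> nat \<Rightarrow> 'a)" where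
  "trunc_Appell_part n M = (\<lambda>i j. if i \<le> n \<and> j \<le> n \<and> j \<le> i then M (i - j) 0 else 0)"

definition trunc_Lagrange_part :: "nat \<Rightarrow> (nat \<Rightarrow> nat \<Rightarrow> 'a::comm_ring_1) \<Rightarrow> (nat \<Rightarrow> nat \<Rightarrow> 'a)" where
  "trunc_Lagrange_part n M = inv\<^bsub>TSR n\<^esub> (trunc_Appell_part n M) \<otimes>\<^bsub>TSR n\<^esub> M"

lemma trunc_Appell_part_riordan_trunc:
  "trunc_Appell_part n (riordan_trunc n (g, f)) = riordan_trunc n (g, fps_X)"
  by (intro ext) (auto simp: trunc_Appell_part_def riordan_trunc_def fps_X_power_mult_right_nth)

lemma trunc_Lagrange_part_riordan_trunc:
  assumes "p \<in> (SR_carrier :: ('a::comm_ring_1 fps \<times> 'a fps) set)"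
  shows "trunc_Lagrange_part n (riordan_trunc n p) = riordan_trunc n (1, snd p)"
proof -
  interpret trunc: group_hom "SR_group :: ('a fps \<times> 'a fps) monoid" "TSR n" "riordan_trunc n"
    unfolding group_hom_def group_hom_axioms_def using group_SR group_TSR riordan_trunc_hom by blast
  obtain g f where p: "p = (g, f)"
    by (cases p)
  have Appell: "(g, fps_X) \<in> carrier SR_group" and Lagrange: "(1, f) \<in> carrier SR_group"
    using assms p by simp_all
  have split: "riordan_trunc n p = riordan_trunc n (g, fps_X) \<otimes>\<^bsub>TSR n\<^esub> riordan_trunc n (1, f)"
    using trunc.hom_mult[OF Appell Lagrange] by (simp add: p)
  have "trunc_Lagrange_part n (riordan_trunc n p)
      = inv\<^bsub>TSR n\<^esub> (riordan_trunc n (g, fps_X)) \<otimes>\<^bsub>TSR n\<^esub> riordan_trunc n p"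
    by (simp add: trunc_Lagrange_part_def p trunc_Appell_part_riordan_trunc)
  also have "\<dots> = riordan_trunc n (1, f)"
    unfolding split using Appell Lagrange by (simp add: trunc.H.m_assoc[symmetric])
  finally show ?thesis
    by (simp add: p)
qed

lemma abelianization_splitting_TSR:
  assumes "n \<ge> 1"
  shows "abelianization_splitting (TSR n :: (nat \<Rightarrow> nat \<Rightarrow> 'a::comm_ring_1) monoid) additive_group
           (riordan_trunc n ` J_carrier) (\<lambda>M. M 1 0) (trunc_Lagrange_part n)"
proof (rule abelianization_splitting.image_splitting[OF abelianization_splitting_SR group_TSR riordan_trunc_hom])
  show "riordan_trunc n ` carrier SR_group = carrier (TSR n :: (nat \<Rightarrow> nat \<Rightarrow> 'a) monoid)"
    by (simp add: trunc_group_def)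
  show "riordan_trunc n p 1 0 = fst p $ 1" for p :: "'a fps \<times> 'a fps"
    using assms by (simp add: riordan_trunc_def)
  show "trunc_Lagrange_part n (riordan_trunc n p) = riordan_trunc n (1, snd p)"
    if "p \<in> carrier SR_group" for p :: "'a fps \<times> 'a fps"
    using that by (simp add: trunc_Lagrange_part_riordan_trunc)
qed

lemma riordan_trunc_1_Appell_eq:
  assumes "g $ 0 = h $ 0" and "g $ 1 = h $ 1"
  shows "riordan_trunc 1 (g, fps_X) = riordan_trunc 1 (h, fps_X)"
  using assms by (intro ext) (auto simp: riordan_trunc_Appell le_Suc_eq)

lemma additive_group_iso_TSA_1:
  "(additive_group :: 'a::comm_ring_1 monoid) \<cong> (TSA 1 :: (nat \<Rightarrow> nat \<Rightarrow> 'a) monoid)"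
proof -
  define \<phi> where "\<phi> d = riordan_trunc 1 (1 + fps_const d * fps_X, fps_X)" for d :: 'a
  have \<phi>_in_TSA: "\<phi> d \<in> carrier (TSA 1)" for d
    by (auto simp: \<phi>_def trunc_group_def SA_carrier_def)
  have "\<phi> \<in> hom additive_group (TSA 1)"
  proof (rule homI)
    fix d e :: 'a
    have "\<phi> d \<otimes>\<^bsub>TSA 1\<^esub> \<phi> e
        = riordan_trunc 1 ((1 + fps_const d * fps_X) * (1 + fps_const e * fps_X), fps_X)"
      by (simp add: \<phi>_def trunc_group_def riordan_trunc_mult[symmetric])
    also have "\<dots> = \<phi> (d + e)"
      unfolding \<phi>_def by (rule riordan_trunc_1_Appell_eq) (simp_all add: algebra_simps)
    finally show "\<phi> (d \<otimes>\<^bsub>additive_group\<^esub> e) = \<phi> d \<otimes>\<^bsub>TSA 1\<^esub> \<phi> e"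
      by (simp add: additive_group_def)
  qed (rule \<phi>_in_TSA)
  moreover have "bij_betw \<phi> (carrier additive_group) (carrier (TSA 1))"
  proof (rule bij_betwI')
    have entry: "\<phi> d 1 0 = d" for d
      by (simp add: \<phi>_def riordan_trunc_Appell)
    show "\<phi> d = \<phi> e \<longleftrightarrow> d = e" for d e
      by (metis entry)
    show "\<phi> d \<in> carrier (TSA 1)" for d
      by (rule \<phi>_in_TSA)
    fix M assume "M \<in> carrier (TSA 1 :: (nat \<Rightarrow> nat \<Rightarrow> 'a) monoid)"
    then obtain g where g0: "g $ 0 = 1" and M: "M = riordan_trunc 1 (g, fps_X)"
      by (auto simp: trunc_group_def SA_carrier_def)
    have "M = \<phi> (g $ 1)"
      unfolding M \<phi>_def by (rule riordan_trunc_1_Appell_eq) (simp_all add: g0)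
    then show "\<exists>d\<in>carrier additive_group. M = \<phi> d"
      by (auto simp: additive_group_def)
  qed
  ultimately show ?thesis
    by (rule is_isoI[OF isoI])
qed

lemma abelianization_SR_iso:
  "abelianization (SR_group :: ('a::comm_ring_1 fps \<times> 'a fps) monoid)
     \<cong> (additive_group :: 'a monoid) \<times>\<times> abelianization (J_group :: ('a fps \<times> 'a fps) monoid)"
  using abelianization_splitting.abelianization_iso[OF abelianization_splitting_SR]
  by (simp add: riordan_group_on_def)

lemma abelianization_TSR_iso:
  assumes "n \<ge> 1"
  shows "abelianization (TSR n :: (nat \<Rightarrow> nat \<Rightarrow> 'a::comm_ring_1) monoid)
           \<cong> (additive_group :: 'a monoid) \<times>\<times> abelianization (TJ n :: (nat \<Rightarrow> nat \<Rightarrow> 'a) monoid)"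
  using abelianization_splitting.abelianization_iso[OF abelianization_splitting_TSR[OF assms]]
  by (simp add: trunc_group_def)

lemma abelianization_TSR_iso_TSA_1:
  assumes "n \<ge> 1"
  shows "abelianization (TSR n :: (nat \<Rightarrow> nat \<Rightarrow> 'a::comm_ring_1) monoid)
           \<cong> (TSA 1 :: (nat \<Rightarrow> nat \<Rightarrow> 'a) monoid) \<times>\<times> abelianization (TJ n :: (nat \<Rightarrow> nat \<Rightarrow> 'a) monoid)"
proof -
  have "(additive_group :: 'a monoid) \<times>\<times> abelianization (TJ n :: (nat \<Rightarrow> nat \<Rightarrow> 'a) monoid)
      \<cong> (TSA 1 :: (nat \<Rightarrow> nat \<Rightarrow> 'a) monoid) \<times>\<times> abelianization (TJ n :: (nat \<Rightarrow> nat \<Rightarrow> 'a) monoid)"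
    using additive_group_iso_TSA_1 iso_refl
    by (rule group.DirProd_iso_trans[OF comm_group.axioms(2)[OF comm_group_additive_group]])
  with abelianization_TSR_iso[OF assms] show ?thesis
    by (rule iso_trans)
qed

theorem theorem3:
  shows "(\<forall>n::nat. n \<ge> 1 \<longrightarrow>
            abelianization (TSR n :: (nat \<Rightarrow> nat \<Rightarrow> 'a::comm_ring_1) monoid)
              \<cong> (TSA 1 :: (nat \<Rightarrow> nat \<Rightarrow> 'a) monoid) \<times>\<times> abelianization (TJ n :: (nat \<Rightarrow> nat \<Rightarrow> 'a) monoid)
          \<and> abelianization (TSR n :: (nat \<Rightarrow> nat \<Rightarrow> 'a) monoid)
              \<cong> (additive_group :: 'a monoid) \<times>\<times> abelianization (TJ n :: (nat \<Rightarrow> nat \<Rightarrow> 'a) monoid))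
       \<and> abelianization (SR_group :: ('a fps \<times> 'a fps) monoid)
           \<cong> (additive_group :: 'a monoid) \<times>\<times> abelianization (J_group :: ('a fps \<times> 'a fps) monoid)"
  using abelianization_TSR_iso_TSA_1 abelianization_TSR_iso abelianization_SR_iso by blast

end
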